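(* Let $S$ be a finite $2$-group and suppose there are $A,B\in\mathcal{A}(S)$ with $AB=S$. If $C_B(a)=A\cap B$ for every $a\in A\setminus(A\cap B)$, then $\mathcal{A}(S)=\{A,B\}$ and every involution of $S$ lies in $A\cup B$.
   Context: $\mathcal{A}(S)$ denotes the set of elementary abelian subgroups of $S$ of maximal order (maximal rank). *)

theory Defs
  imports "HOL-Algebra.Algebra"
begin

definition elem_abelian :: "('a, 'b) monoid_scheme \<Rightarrow> 'a set \<Rightarrow> bool" where
  "elem_abelian G E \<longleftrightarrow> subgroup E G
     \<and> (\<forall>x\<in>E. \<forall>y\<in>E. x \<otimes>\<^bsub>G\<^esub> y = y \<otimes>\<^bsub>G\<^esub> x)
     \<and> (\<forall>x\<in>E. x \<otimes>\<^bsub>G\<^esub> x = \<one>\<^bsub>G\<^esub>)"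

definition max_elem_abelian :: "('a, 'b) monoid_scheme \<Rightarrow> 'a set set" where
  "max_elem_abelian G = {E. elem_abelian G E \<and>
     (\<forall>F. elem_abelian G F \<longrightarrow> card F \<le> card E)}"

definition centralizer_in :: "('a, 'b) monoid_scheme \<Rightarrow> 'a set \<Rightarrow> 'a \<Rightarrow> 'a set" where
  "centralizer_in G B a = {b \<in> B. a \<otimes>\<^bsub>G\<^esub> b = b \<otimes>\<^bsub>G\<^esub> a}"

definition involution :: "('a, 'b) monoid_scheme \<Rightarrow> 'a \<Rightarrow> bool" where
  "involution G x \<longleftrightarrow> x \<in> carrier G \<and> group.ord G x = 2"

end

theory Submission
  imports Defs
begin

text \<open>Write an element \<open>x\<close> with \<open>x\<^sup>2 = 1\<close> as \<open>x = a b\<close> with \<open>a \<in> A\<close>, \<open>b \<in> B\<close>. Since \<open>a\<close>,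
  \<open>b\<close> and \<open>a b\<close> are all self-inverse, \<open>a\<close> and \<open>b\<close> commute. If \<open>a \<notin> B\<close>, the centralizer
  hypothesis puts \<open>b\<close> into \<open>A\<close>, so \<open>x \<in> A\<close>; otherwise \<open>x \<in> B\<close>. Hence every involution, and
  every elementary abelian subgroup, lies in \<open>A \<union> B\<close>. A subgroup covered by two subgroups lies
  in one of them, so by maximality of orders each member of \<open>\<A>(S)\<close> is \<open>A\<close> or \<open>B\<close>.\<close>

lemma (in group) commute_if_squares_eq_one:
  assumes a: "a \<in> carrier G" and b: "b \<in> carrier G"
    and "a \<otimes> a = \<one>" and "b \<otimes> b = \<one>" and "(a \<otimes> b) \<otimes> (a \<otimes> b) = \<one>"
  shows "a \<otimes> b = b \<otimes> a"
proof -
  have "inv a = a" and "inv b = b" and "inv (a \<otimes> b) = a \<otimes> b"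
    using assms by (simp_all add: inv_equality)
  moreover have "inv (a \<otimes> b) = inv b \<otimes> inv a"
    using a b by (rule inv_mult_group)
  ultimately show ?thesis by simp
qed

lemma (in group) subgroup_subset_Un_cases:
  assumes A: "subgroup A G" and B: "subgroup B G" and E: "subgroup E G"
    and EAB: "E \<subseteq> A \<union> B"
  shows "E \<subseteq> A \<or> E \<subseteq> B"
proof (rule ccontr)
  assume "\<not> (E \<subseteq> A \<or> E \<subseteq> B)"
  then obtain x y where x: "x \<in> E" "x \<notin> A" and y: "y \<in> E" "y \<notin> B" by auto
  with EAB have xB: "x \<in> B" and yA: "y \<in> A" by auto
  have xc: "x \<in> carrier G" and yc: "y \<in> carrier G"
    using x y subgroup.subset[OF E] by auto
  have "x \<otimes> y \<in> A \<union> B"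
    using x y EAB subgroup.m_closed[OF E] by auto
  then show False
  proof
    assume "x \<otimes> y \<in> A"
    then have "x \<otimes> y \<otimes> inv y \<in> A"
      using yA subgroup.m_closed[OF A] subgroup.m_inv_closed[OF A] by blast
    with xc yc x show False by (simp add: m_assoc)
  next
    assume "x \<otimes> y \<in> B"
    then have "inv x \<otimes> (x \<otimes> y) \<in> B"
      using xB subgroup.m_closed[OF B] subgroup.m_inv_closed[OF B] by blast
    with xc yc y show False by (simp add: m_assoc[symmetric])
  qed
qed

lemma (in group) square_eq_one_in_Un_of_product:
  assumes A: "subgroup A G" and B: "subgroup B G"
    and sqA: "\<forall>a\<in>A. a \<otimes> a = \<one>" and sqB: "\<forall>b\<in>B. b \<otimes> b = \<one>"
    and AB: "A <#> B = carrier G"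
    and cent: "\<forall>a \<in> A - (A \<inter> B). centralizer_in G B a = A \<inter> B"
    and x: "x \<in> carrier G" and xx: "x \<otimes> x = \<one>"
  shows "x \<in> A \<union> B"
proof -
  obtain a b where a: "a \<in> A" and b: "b \<in> B" and xab: "x = a \<otimes> b"
    using x AB unfolding set_mult_def by blast
  have "a \<otimes> b = b \<otimes> a"
    using a b sqA sqB xx xab subgroup.subset[OF A] subgroup.subset[OF B]
    by (intro commute_if_squares_eq_one) auto
  show ?thesis
  proof (cases "a \<in> B")
    case True
    with b xab show ?thesis using subgroup.m_closed[OF B] by blast
  next
    case False
    with a cent have "centralizer_in G B a = A \<inter> B" by blast
    with b \<open>a \<otimes> b = b \<otimes> a\<close> have "b \<in> A" by (auto simp: centralizer_in_def)
    with a xab show ?thesis using subgroup.m_closed[OF A] by blast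
  qed
qed

lemma max_elem_abelian_eq_if_subset:
  assumes "E \<in> max_elem_abelian G" and "elem_abelian G F" and "finite F" and "E \<subseteq> F"
  shows "E = F"
proof -
  have "card F \<le> card E"
    using assms(1,2) by (simp add: max_elem_abelian_def)
  with assms(3,4) show ?thesis by (rule card_seteq)
qed

lemma (in group) involution_square_eq_one:
  assumes "involution G x"
  shows "x \<otimes> x = \<one>"
proof -
  have x: "x \<in> carrier G" and "ord x = 2"
    using assms by (auto simp: involution_def)
  then have "x [^] (2::nat) = \<one>" using pow_ord_eq_1 by metis
  with x show ?thesis by (simp add: numeral_2_eq_2)
qed

theorem lemma2p14:
  fixes S (structure)
  assumes "group S"
    and "finite (carrier S)"
    and "\<exists>n::nat. order S = 2 ^ n"
    and "A \<in> max_elem_abelian S" and "B \<in> max_elem_abelian S"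
    and "A <#> B = carrier S"
    and "\<forall>a \<in> A - (A \<inter> B). centralizer_in S B a = A \<inter> B"
  shows "max_elem_abelian S = {A, B}
    \<and> (\<forall>x \<in> carrier S. involution S x \<longrightarrow> x \<in> A \<union> B)"
proof -
  interpret group S by (rule assms(1))
  have elem_abelian_max: "elem_abelian S E" if "E \<in> max_elem_abelian S" for E
    using that by (simp add: max_elem_abelian_def)
  have subgroup_max: "subgroup E S" if "E \<in> max_elem_abelian S" for E
    using elem_abelian_max[OF that] by (simp add: elem_abelian_def)
  have in_AB: "x \<in> A \<union> B" if "x \<in> carrier S" "x \<otimes> x = \<one>" for x
    using assms(4-7) that elem_abelian_max[of A] elem_abelian_max[of B]
    by (intro square_eq_one_in_Un_of_product subgroup_max) (auto simp: elem_abelian_def)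
  have finite_max: "finite E" if "E \<in> max_elem_abelian S" for E
    using assms(2) subgroup.subset[OF subgroup_max[OF that]] finite_subset by blast
  have "E \<in> {A, B}" if E: "E \<in> max_elem_abelian S" for E
  proof -
    have "E \<subseteq> A \<union> B"
    proof
      fix x assume "x \<in> E"
      with elem_abelian_max[OF E] have "x \<otimes> x = \<one>" by (simp add: elem_abelian_def)
      with \<open>x \<in> E\<close> subgroup.subset[OF subgroup_max[OF E]] show "x \<in> A \<union> B"
        using in_AB by blast
    qed
    then have "E \<subseteq> A \<or> E \<subseteq> B"
      by (intro subgroup_subset_Un_cases subgroup_max assms(4,5) E)
    then have "E = A \<or> E = B"
      using max_elem_abelian_eq_if_subset[OF E elem_abelian_max finite_max] assms(4,5) by blast
    then show ?thesis by simp
  qed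
  moreover have "x \<in> A \<union> B" if "x \<in> carrier S" "involution S x" for x
    using in_AB that involution_square_eq_one by simp
  ultimately show ?thesis
    using assms(4,5) by auto
qed

end
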